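(* Let $P$ be an irreducible transition matrix on the finite set $S$, reversible with respect to $\pi$, and suppose $\mathrm{trace}(P)$ (equivalently, the sum of the eigenvalues of $P$) equals $\max\big(0,(2\pi_{\max}-1)/\pi_{\max}\big)$, where $\pi_{\max}=\max_x\pi(x)$. Then no other transition matrix that is reversible with respect to $\pi$ efficiency-dominates $P$.
   Context: $S$ is a finite set, and $\pi$ is a probability distribution on $S$ with $\pi(x)>0$ for all $x$. A transition matrix $P$ is reversible with respect to $\pi$ if $\pi(x)P(x,y)=\pi(y)P(y,x)$ for all $x,y$; irreducible if every state can be reached from every other with positive probability in some number of steps. For a Markov chain $X_1,X_2,\dots$ with transition matrix $P$ and $X_1\sim\pi$, $v(f,P)=\lim_{N\to\infty}\frac1N\mathrm{Var}\big(\sum_{i=1}^N f(X_i)\big)$. $P$ efficiency-dominates $Q$ if $v(f,P)\le v(f,Q)$ for all $f:S\to\mathbb R$. *)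

theory Defs
  imports "HOL-Analysis.Analysis"
begin

definition prob_dist :: "('a::finite \<Rightarrow> real) \<Rightarrow> bool" where
  "prob_dist \<mu> \<longleftrightarrow> (\<forall>x. \<mu> x \<ge> 0) \<and> (\<Sum>x\<in>UNIV. \<mu> x) = 1"

definition transition_matrix :: "('a::finite \<Rightarrow> 'a \<Rightarrow> real) \<Rightarrow> bool" where
  "transition_matrix P \<longleftrightarrow> (\<forall>x y. P x y \<ge> 0) \<and> (\<forall>x. (\<Sum>y\<in>UNIV. P x y) = 1)"

definition reversible :: "('a::finite \<Rightarrow> real) \<Rightarrow> ('a \<Rightarrow> 'a \<Rightarrow> real) \<Rightarrow> bool" where
  "reversible \<mu> P \<longleftrightarrow> (\<forall>x y. \<mu> x * P x y = \<mu> y * P y x)"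

fun mpow :: "('a::finite \<Rightarrow> 'a \<Rightarrow> real) \<Rightarrow> nat \<Rightarrow> 'a \<Rightarrow> 'a \<Rightarrow> real" where
  "mpow P 0 x y = (if x = y then 1 else 0)"
| "mpow P (Suc n) x y = (\<Sum>z\<in>UNIV. mpow P n x z * P z y)"

definition irreducible_tm :: "('a::finite \<Rightarrow> 'a \<Rightarrow> real) \<Rightarrow> bool" where
  "irreducible_tm P \<longleftrightarrow> (\<forall>x y. \<exists>n. mpow P n x y > 0)"

definition trace_tm :: "('a::finite \<Rightarrow> 'a \<Rightarrow> real) \<Rightarrow> real" where
  "trace_tm P = (\<Sum>x\<in>UNIV. P x x)"

fun chain_prob :: "('a \<Rightarrow> 'a \<Rightarrow> real) \<Rightarrow> 'a \<Rightarrow> 'a list \<Rightarrow> real" where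
  "chain_prob P x [] = 1"
| "chain_prob P x (y # ys) = P x y * chain_prob P y ys"

fun path_prob :: "('a \<Rightarrow> real) \<Rightarrow> ('a \<Rightarrow> 'a \<Rightarrow> real) \<Rightarrow> 'a list \<Rightarrow> real" where
  "path_prob \<mu> P [] = 1"
| "path_prob \<mu> P (x # xs) = \<mu> x * chain_prob P x xs"

definition path_exp :: "nat \<Rightarrow> ('a::finite \<Rightarrow> real) \<Rightarrow> ('a \<Rightarrow> 'a \<Rightarrow> real) \<Rightarrow> ('a list \<Rightarrow> real) \<Rightarrow> real" where
  "path_exp N \<mu> P g = (\<Sum>xs\<in>{xs. length xs = N}. path_prob \<mu> P xs * g xs)"

definition sum_var :: "nat \<Rightarrow> ('a::finite \<Rightarrow> real) \<Rightarrow> ('a \<Rightarrow> 'a \<Rightarrow> real) \<Rightarrow> ('a \<Rightarrow> real) \<Rightarrow> real" where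
  "sum_var N \<mu> P f =
     path_exp N \<mu> P (\<lambda>xs. (sum_list (map f xs))\<^sup>2) - (path_exp N \<mu> P (\<lambda>xs. sum_list (map f xs)))\<^sup>2"

text \<open>Asymptotic variance v(f,P) = lim_{N\<rightarrow>\<infinity>} Var(...)/N, taken in the extended reals
  (it may be +\<infinity>, e.g. for reducible chains).\<close>
definition asym_var :: "('a::finite \<Rightarrow> real) \<Rightarrow> ('a \<Rightarrow> real) \<Rightarrow> ('a \<Rightarrow> 'a \<Rightarrow> real) \<Rightarrow> ereal" where
  "asym_var \<mu> f P = lim (\<lambda>N. ereal (sum_var N \<mu> P f / real N))"

definition eff_dominates :: "('a::finite \<Rightarrow> real) \<Rightarrow> ('a \<Rightarrow> 'a \<Rightarrow> real) \<Rightarrow> ('a \<Rightarrow> 'a \<Rightarrow> real) \<Rightarrow> bool" where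
  "eff_dominates \<mu> P Q \<longleftrightarrow> (\<forall>f. asym_var \<mu> f P \<le> asym_var \<mu> f Q)"

end

theory Submission
  imports Defs
begin

text \<open>
  For a \<open>\<mu>\<close>-reversible chain \<open>K\<close> and \<open>f = h - K h\<close>, the variance of the partial sums grows like
  \<open>N (2\<langle>h, f\<rangle> - \<langle>f, f\<rangle>)\<close>, with \<open>\<langle>-, -\<rangle>\<close> the inner product of \<open>L\<^sup>2(\<mu>)\<close>, while a non-constant harmonic function of \<open>K\<close>
  has infinite asymptotic variance. So if \<open>Q\<close> dominates the irreducible \<open>P\<close>, then \<open>Q\<close> has only
  constant harmonic functions, every centred \<open>f\<close> solves both Poisson equations \<open>f = a - Q a = b - P b\<close>,
  and domination reads \<open>\<langle>a, f\<rangle> \<le> \<langle>b, f\<rangle>\<close>. Together with \<open>\<langle>a - b, (I - Q)(a - b)\<rangle> \<ge> 0\<close> this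
  gives \<open>\<langle>b, Q b\<rangle> \<le> \<langle>b, P b\<rangle>\<close> for all \<open>b\<close>: \<open>P - Q\<close> is positive semidefinite. But every
  \<open>\<mu>\<close>-reversible \<open>Q\<close> has \<open>Q(m, m) \<ge> (2\<mu>(m) - 1) / \<mu>(m)\<close> at a state \<open>m\<close> of maximal mass, so
  \<open>trace P\<close> is the least possible trace and \<open>trace (P - Q) \<le> 0\<close>, which forces \<open>Q = P\<close>.
\<close>

definition mean :: "('a::finite \<Rightarrow> real) \<Rightarrow> ('a \<Rightarrow> real) \<Rightarrow> real" where
  "mean \<mu> u = (\<Sum>x\<in>UNIV. \<mu> x * u x)"

definition l2_inner :: "('a::finite \<Rightarrow> real) \<Rightarrow> ('a \<Rightarrow> real) \<Rightarrow> ('a \<Rightarrow> real) \<Rightarrow> real" where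
  "l2_inner \<mu> u v = (\<Sum>x\<in>UNIV. \<mu> x * u x * v x)"

definition markov_op :: "('a::finite \<Rightarrow> 'a \<Rightarrow> real) \<Rightarrow> ('a \<Rightarrow> real) \<Rightarrow> 'a \<Rightarrow> real" where
  "markov_op K u x = (\<Sum>y\<in>UNIV. K x y * u y)"

lemma mean_const: "prob_dist \<mu> \<Longrightarrow> mean \<mu> (\<lambda>_. c) = c"
  by (simp add: mean_def prob_dist_def sum_distrib_right[symmetric])

lemma mean_diff: "mean \<mu> (\<lambda>x. u x - v x) = mean \<mu> u - mean \<mu> v"
  by (simp add: mean_def sum_subtractf right_diff_distrib)

lemma l2_inner_commute: "l2_inner \<mu> u v = l2_inner \<mu> v u"
  by (simp add: l2_inner_def algebra_simps)

lemma l2_inner_add_left: "l2_inner \<mu> (\<lambda>x. u x + v x) w = l2_inner \<mu> u w + l2_inner \<mu> v w"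
  by (simp add: l2_inner_def sum.distrib algebra_simps)

lemma l2_inner_cmult_left: "l2_inner \<mu> (\<lambda>x. c * u x) w = c * l2_inner \<mu> u w"
  by (simp add: l2_inner_def sum_distrib_left algebra_simps)

lemma l2_inner_diff_left: "l2_inner \<mu> (\<lambda>x. u x - v x) w = l2_inner \<mu> u w - l2_inner \<mu> v w"
  by (simp add: l2_inner_def sum_subtractf algebra_simps)

lemma l2_inner_diff_right: "l2_inner \<mu> u (\<lambda>x. v x - w x) = l2_inner \<mu> u v - l2_inner \<mu> u w"
  by (simp add: l2_inner_def sum_subtractf algebra_simps)

lemma l2_inner_indicator_left: "l2_inner \<mu> (\<lambda>x. if x = i then 1 else 0) w = \<mu> i * w i"
proof -
  have "l2_inner \<mu> (\<lambda>x. if x = i then 1 else 0) w = (\<Sum>x\<in>UNIV. if x = i then \<mu> x * w x else 0)"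
    unfolding l2_inner_def by (rule sum.cong) auto
  then show ?thesis
    by simp
qed

lemma l2_inner_self_nonpos_imp_zero:
  assumes "\<forall>x. \<mu> x > 0" and "l2_inner \<mu> f f \<le> 0"
  shows "f x = 0"
proof -
  have "\<forall>x\<in>UNIV. 0 \<le> \<mu> x * f x * f x"
    using assms(1) by (simp add: less_imp_le mult.assoc)
  then have "\<mu> x * f x * f x = 0"
    using assms(2) sum_nonneg_eq_0_iff[of UNIV "\<lambda>x. \<mu> x * f x * f x"]
    by (simp add: l2_inner_def sum_nonneg antisym)
  then show ?thesis
    using assms(1) by (metis mult_eq_0_iff not_less_iff_gr_or_eq)
qed

lemma markov_op_diff: "markov_op K (\<lambda>y. u y - v y) x = markov_op K u x - markov_op K v x"
  by (simp add: markov_op_def sum_subtractf right_diff_distrib)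

lemma markov_op_add: "markov_op K (\<lambda>y. u y + v y) x = markov_op K u x + markov_op K v x"
  by (simp add: markov_op_def sum.distrib distrib_left)

lemma markov_op_cmult: "markov_op K (\<lambda>y. c * u y) x = c * markov_op K u x"
  by (simp add: markov_op_def sum_distrib_left algebra_simps)

lemma markov_op_const: "transition_matrix K \<Longrightarrow> markov_op K (\<lambda>_. c) x = c"
  by (simp add: markov_op_def transition_matrix_def sum_distrib_right[symmetric])

lemma markov_op_indicator: "markov_op K (\<lambda>y. if y = a then 1 else 0) x = K x a"
  by (simp add: markov_op_def if_distrib cong: if_cong)

lemma abs_markov_op_le:
  assumes "transition_matrix K" and "\<And>y. \<bar>u y\<bar> \<le> B"
  shows "\<bar>markov_op K u x\<bar> \<le> B"
proof -
  have "\<bar>markov_op K u x\<bar> \<le> (\<Sum>y\<in>UNIV. K x y * B)"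
    unfolding markov_op_def using assms
    by (intro order.trans[OF sum_abs] sum_mono) (simp add: transition_matrix_def abs_mult mult_left_mono)
  also have "\<dots> = B"
    using assms(1) by (simp add: transition_matrix_def sum_distrib_right[symmetric])
  finally show ?thesis .
qed

lemma abs_markov_op_power_le:
  assumes "transition_matrix K"
  shows "\<bar>(markov_op K ^^ n) u x\<bar> \<le> (\<Sum>y\<in>UNIV. \<bar>u y\<bar>)"
proof (induction n arbitrary: x)
  case 0
  show ?case by simp (rule member_le_sum, simp_all)
next
  case (Suc n)
  then show ?case using abs_markov_op_le[OF assms] by simp
qed

lemma l2_inner_markov_op_power_bounded:
  assumes "prob_dist \<mu>" and "transition_matrix K"
  shows "\<bar>l2_inner \<mu> u ((markov_op K ^^ n) v)\<bar> \<le> (\<Sum>x\<in>UNIV. \<mu> x * \<bar>u x\<bar>) * (\<Sum>y\<in>UNIV. \<bar>v y\<bar>)"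
proof -
  have "\<bar>l2_inner \<mu> u ((markov_op K ^^ n) v)\<bar> \<le> (\<Sum>x\<in>UNIV. (\<mu> x * \<bar>u x\<bar>) * \<bar>(markov_op K ^^ n) v x\<bar>)"
    unfolding l2_inner_def using assms(1)
    by (intro order.trans[OF sum_abs] sum_mono) (simp add: prob_dist_def abs_mult)
  also have "\<dots> \<le> (\<Sum>x\<in>UNIV. (\<mu> x * \<bar>u x\<bar>) * (\<Sum>y\<in>UNIV. \<bar>v y\<bar>))"
    using assms by (intro sum_mono mult_left_mono abs_markov_op_power_le) (simp_all add: prob_dist_def)
  finally show ?thesis by (simp add: sum_distrib_right)
qed

locale stationary_chain =
  fixes \<mu> :: "'a::finite \<Rightarrow> real" and K :: "'a \<Rightarrow> 'a \<Rightarrow> real"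
  assumes distribution: "prob_dist \<mu>"
    and transition: "transition_matrix K"
    and stationary: "(\<Sum>x\<in>UNIV. \<mu> x * K x y) = \<mu> y"

locale reversible_chain =
  fixes \<mu> :: "'a::finite \<Rightarrow> real" and K :: "'a \<Rightarrow> 'a \<Rightarrow> real"
  assumes distribution: "prob_dist \<mu>"
    and transition: "transition_matrix K"
    and reversible: "reversible \<mu> K"

sublocale reversible_chain \<subseteq> stationary_chain
proof
  show "prob_dist \<mu>" "transition_matrix K" by (fact distribution transition)+
  fix y
  have "(\<Sum>x\<in>UNIV. \<mu> x * K x y) = \<mu> y * (\<Sum>x\<in>UNIV. K y x)"
    using reversible by (simp add: reversible_def sum_distrib_left)
  then show "(\<Sum>x\<in>UNIV. \<mu> x * K x y) = \<mu> y"
    using transition by (simp add: transition_matrix_def)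
qed

context stationary_chain
begin

lemma mean_markov_op: "mean \<mu> (markov_op K u) = mean \<mu> u"
proof -
  have "mean \<mu> (markov_op K u) = (\<Sum>y\<in>UNIV. (\<Sum>x\<in>UNIV. \<mu> x * K x y) * u y)"
    unfolding mean_def markov_op_def
    by (simp add: sum_distrib_left sum_distrib_right mult.assoc, rule sum.swap)
  then show ?thesis
    by (simp add: stationary mean_def)
qed

lemma mean_poisson: "mean \<mu> (\<lambda>x. h x - markov_op K h x) = 0"
  by (simp add: mean_diff mean_markov_op)

lemma dirichlet_form_eq:
  "2 * (l2_inner \<mu> u u - l2_inner \<mu> u (markov_op K u))
     = (\<Sum>x\<in>UNIV. \<Sum>y\<in>UNIV. \<mu> x * K x y * (u x - u y)\<^sup>2)"
proof -
  have rows: "(\<Sum>y\<in>UNIV. \<mu> x * K x y * (u x)\<^sup>2) = \<mu> x * (u x)\<^sup>2" for x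
  proof -
    have "(\<Sum>y\<in>UNIV. \<mu> x * K x y * (u x)\<^sup>2) = \<mu> x * (u x)\<^sup>2 * (\<Sum>y\<in>UNIV. K x y)"
      unfolding sum_distrib_left by (simp add: algebra_simps)
    then show ?thesis
      using transition by (simp add: transition_matrix_def)
  qed
  have "(\<Sum>x\<in>UNIV. \<Sum>y\<in>UNIV. \<mu> x * K x y * (u x - u y)\<^sup>2)
      = (\<Sum>x\<in>UNIV. \<Sum>y\<in>UNIV. \<mu> x * K x y * (u x)\<^sup>2)
        + mean \<mu> (markov_op K (\<lambda>y. (u y)\<^sup>2)) - 2 * l2_inner \<mu> u (markov_op K u)"
    unfolding mean_def l2_inner_def markov_op_def
    by (simp add: power2_diff sum.distrib sum_subtractf sum_distrib_left algebra_simps)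
  also have "\<dots> = 2 * (l2_inner \<mu> u u - l2_inner \<mu> u (markov_op K u))"
  proof -
    have "(\<Sum>x\<in>UNIV. \<Sum>y\<in>UNIV. \<mu> x * K x y * (u x)\<^sup>2) = l2_inner \<mu> u u"
      unfolding rows by (simp add: l2_inner_def power2_eq_square mult.assoc)
    moreover have "mean \<mu> (markov_op K (\<lambda>y. (u y)\<^sup>2)) = l2_inner \<mu> u u"
      unfolding mean_markov_op by (simp add: mean_def l2_inner_def power2_eq_square mult.assoc)
    ultimately show ?thesis by simp
  qed
  finally show ?thesis by simp
qed

lemma l2_inner_markov_op_le: "l2_inner \<mu> u (markov_op K u) \<le> l2_inner \<mu> u u"
proof -
  have "0 \<le> (\<Sum>x\<in>UNIV. \<Sum>y\<in>UNIV. \<mu> x * K x y * (u x - u y)\<^sup>2)"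
    using distribution transition by (intro sum_nonneg) (simp add: prob_dist_def transition_matrix_def)
  then show ?thesis
    using dirichlet_form_eq[of u] by simp
qed

end

lemma (in reversible_chain) markov_op_self_adjoint:
  "l2_inner \<mu> (markov_op K u) v = l2_inner \<mu> u (markov_op K v)"
proof -
  have "l2_inner \<mu> (markov_op K u) v = (\<Sum>x\<in>UNIV. \<Sum>y\<in>UNIV. (\<mu> x * K x y) * u y * v x)"
    unfolding l2_inner_def markov_op_def by (simp add: sum_distrib_left sum_distrib_right algebra_simps)
  also have "\<dots> = (\<Sum>x\<in>UNIV. \<Sum>y\<in>UNIV. (\<mu> y * K y x) * u y * v x)"
    using reversible by (simp add: reversible_def)
  also have "\<dots> = l2_inner \<mu> u (markov_op K v)"
    unfolding l2_inner_def markov_op_def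
    by (subst sum.swap) (simp add: sum_distrib_left sum_distrib_right algebra_simps)
  finally show ?thesis .
qed

section \<open>Moments of partial sums\<close>

definition chain_exp :: "nat \<Rightarrow> ('a::finite \<Rightarrow> 'a \<Rightarrow> real) \<Rightarrow> 'a \<Rightarrow> ('a list \<Rightarrow> real) \<Rightarrow> real" where
  "chain_exp N K x F = (\<Sum>xs\<in>{xs. length xs = N}. chain_prob K x xs * F xs)"

lemma sum_lists_length_Suc:
  "(\<Sum>xs\<in>{xs::'a::finite list. length xs = Suc n}. F xs) = (\<Sum>y\<in>UNIV. \<Sum>ys\<in>{ys. length ys = n}. F (y # ys))"
proof -
  have "{xs::'a list. length xs = Suc n} = (\<lambda>(y, ys). y # ys) ` (UNIV \<times> {ys. length ys = n})"
    by (auto simp: length_Suc_conv image_iff)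
  moreover have "inj_on (\<lambda>(y, ys). y # ys) (UNIV \<times> {ys::'a list. length ys = n})"
    by (auto simp: inj_on_def)
  ultimately show ?thesis
    by (simp add: sum.reindex sum.cartesian_product split_def)
qed

lemma chain_exp_0: "chain_exp 0 K x F = F []"
  by (simp add: chain_exp_def)

lemma chain_exp_Suc: "chain_exp (Suc N) K x F = (\<Sum>y\<in>UNIV. K x y * chain_exp N K y (\<lambda>ys. F (y # ys)))"
  unfolding chain_exp_def sum_lists_length_Suc by (simp add: sum_distrib_left mult.assoc)

lemma path_exp_0: "path_exp 0 \<mu> K F = F []"
  by (simp add: path_exp_def)

lemma path_exp_Suc: "path_exp (Suc N) \<mu> K F = (\<Sum>x\<in>UNIV. \<mu> x * chain_exp N K x (\<lambda>ys. F (x # ys)))"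
  unfolding path_exp_def chain_exp_def sum_lists_length_Suc by (simp add: sum_distrib_left mult.assoc)

lemma chain_exp_add: "chain_exp N K x (\<lambda>xs. F xs + G xs) = chain_exp N K x F + chain_exp N K x G"
  by (simp add: chain_exp_def sum.distrib algebra_simps)

lemma chain_exp_cmult: "chain_exp N K x (\<lambda>xs. c * F xs) = c * chain_exp N K x F"
  by (simp add: chain_exp_def sum_distrib_left algebra_simps)

lemma chain_exp_const:
  assumes "transition_matrix K"
  shows "chain_exp N K x (\<lambda>_. c) = c"
proof (induction N arbitrary: x)
  case 0
  then show ?case by (simp add: chain_exp_0)
next
  case (Suc N)
  then show ?case
    using assms by (simp add: chain_exp_Suc transition_matrix_def sum_distrib_right[symmetric])
qed

definition expected_sum :: "('a::finite \<Rightarrow> 'a \<Rightarrow> real) \<Rightarrow> ('a \<Rightarrow> real) \<Rightarrow> nat \<Rightarrow> 'a \<Rightarrow> real" where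
  "expected_sum K f N x = chain_exp N K x (\<lambda>xs. sum_list (map f xs))"

lemma expected_sum_0: "expected_sum K f 0 x = 0"
  by (simp add: expected_sum_def chain_exp_0)

lemma chain_exp_sum_Cons:
  assumes "transition_matrix K"
  shows "chain_exp N K x (\<lambda>xs. sum_list (map f (y # xs))) = f y + expected_sum K f N x"
  using chain_exp_add[of N K x "\<lambda>_. f y"] chain_exp_const[OF assms]
  by (simp add: expected_sum_def)

lemma chain_exp_sum_sq_Cons:
  assumes "transition_matrix K"
  shows "chain_exp N K x (\<lambda>xs. (sum_list (map f (y # xs)))\<^sup>2)
       = (f y)\<^sup>2 + 2 * f y * expected_sum K f N x + chain_exp N K x (\<lambda>xs. (sum_list (map f xs))\<^sup>2)"
proof -
  have "(\<lambda>xs. (sum_list (map f (y # xs)))\<^sup>2)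
      = (\<lambda>xs. ((f y)\<^sup>2 + (2 * f y) * sum_list (map f xs)) + (sum_list (map f xs))\<^sup>2)"
    by (simp add: power2_eq_square algebra_simps)
  then show ?thesis
    by (simp add: chain_exp_add chain_exp_cmult chain_exp_const[OF assms] expected_sum_def)
qed

lemma expected_sum_Suc:
  assumes "transition_matrix K"
  shows "expected_sum K f (Suc N) x = markov_op K (\<lambda>y. f y + expected_sum K f N y) x"
  using chain_exp_sum_Cons[OF assms]
  by (simp add: expected_sum_def chain_exp_Suc markov_op_def del: sum_list.Cons list.map)

context stationary_chain
begin

lemma mean_chain_exp_eq_path_exp: "(\<Sum>x\<in>UNIV. \<mu> x * chain_exp N K x F) = path_exp N \<mu> K F"
proof (cases N)
  case 0
  with distribution show ?thesis
    by (simp add: chain_exp_0 path_exp_0 prob_dist_def sum_distrib_right[symmetric])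
next
  case (Suc M)
  have "(\<Sum>x\<in>UNIV. \<mu> x * chain_exp N K x F)
      = (\<Sum>y\<in>UNIV. (\<Sum>x\<in>UNIV. \<mu> x * K x y) * chain_exp M K y (\<lambda>ys. F (y # ys)))"
    unfolding Suc chain_exp_Suc
    by (simp add: sum_distrib_left sum_distrib_right mult.assoc, rule sum.swap)
  then show ?thesis
    by (simp add: Suc stationary path_exp_Suc)
qed

lemma path_exp_sum: "path_exp N \<mu> K (\<lambda>xs. sum_list (map f xs)) = real N * mean \<mu> f"
proof (induction N)
  case 0
  then show ?case by (simp add: path_exp_0)
next
  case (Suc N)
  have "path_exp (Suc N) \<mu> K (\<lambda>xs. sum_list (map f xs))
      = (\<Sum>x\<in>UNIV. \<mu> x * f x + \<mu> x * chain_exp N K x (\<lambda>xs. sum_list (map f xs)))"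
    unfolding path_exp_Suc chain_exp_sum_Cons[OF transition] by (simp add: expected_sum_def algebra_simps)
  also have "\<dots> = mean \<mu> f + real N * mean \<mu> f"
    by (simp add: sum.distrib mean_chain_exp_eq_path_exp Suc.IH mean_def)
  finally show ?case by (simp add: algebra_simps)
qed

lemma sum_var_0: "sum_var 0 \<mu> K f = 0"
  by (simp add: sum_var_def path_exp_0)

lemma sum_var_Suc:
  assumes "mean \<mu> f = 0"
  shows "sum_var (Suc N) \<mu> K f
       = sum_var N \<mu> K f + l2_inner \<mu> f f + 2 * l2_inner \<mu> f (expected_sum K f N)"
proof -
  have "path_exp (Suc N) \<mu> K (\<lambda>xs. (sum_list (map f xs))\<^sup>2)
      = (\<Sum>x\<in>UNIV. \<mu> x * f x * f x + 2 * (\<mu> x * f x * expected_sum K f N x)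
                   + \<mu> x * chain_exp N K x (\<lambda>xs. (sum_list (map f xs))\<^sup>2))"
    unfolding path_exp_Suc chain_exp_sum_sq_Cons[OF transition] by (simp add: power2_eq_square algebra_simps)
  also have "\<dots> = l2_inner \<mu> f f + 2 * l2_inner \<mu> f (expected_sum K f N)
                  + path_exp N \<mu> K (\<lambda>xs. (sum_list (map f xs))\<^sup>2)"
    by (simp add: sum.distrib mean_chain_exp_eq_path_exp l2_inner_def sum_distrib_left)
  finally show ?thesis
    using assms by (simp add: sum_var_def path_exp_sum)
qed

end

section \<open>Asymptotic variance\<close>

context stationary_chain
begin

lemma expected_sum_harmonic:
  assumes "markov_op K f = f"
  shows "expected_sum K f N x = real N * f x"
proof (induction N arbitrary: x)
  case 0
  then show ?case by (simp add: expected_sum_0)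
next
  case (Suc N)
  then have "expected_sum K f (Suc N) x = markov_op K (\<lambda>y. (real N + 1) * f y) x"
    by (simp add: expected_sum_Suc[OF transition] algebra_simps)
  then show ?case by (simp add: markov_op_cmult assms)
qed

lemma sum_var_harmonic:
  assumes "markov_op K f = f" and "mean \<mu> f = 0"
  shows "sum_var N \<mu> K f = (real N)\<^sup>2 * l2_inner \<mu> f f"
proof (induction N)
  case 0
  then show ?case by (simp add: sum_var_0)
next
  case (Suc N)
  have "l2_inner \<mu> f (expected_sum K f N) = real N * l2_inner \<mu> f f"
    by (simp add: expected_sum_harmonic[OF assms(1)] l2_inner_def sum_distrib_left algebra_simps)
  then show ?case
    by (simp add: sum_var_Suc[OF assms(2)] Suc.IH power2_eq_square algebra_simps)
qed

lemma asym_var_harmonic: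
  assumes "markov_op K f = f" and "mean \<mu> f = 0" and "l2_inner \<mu> f f > 0"
  shows "asym_var \<mu> f K = \<infinity>"
proof -
  have "sum_var N \<mu> K f / real N = real N * l2_inner \<mu> f f" for N
    by (cases "N = 0") (simp_all add: sum_var_harmonic[OF assms(1,2)] power2_eq_square)
  moreover have "((\<lambda>N. ereal (real N * l2_inner \<mu> f f)) \<longlongrightarrow> \<infinity>) sequentially"
    unfolding tendsto_PInfty_eq_at_top using assms(3)
    by (intro filterlim_at_top_mult_tendsto_pos[OF tendsto_const] filterlim_real_sequentially)
  ultimately show ?thesis
    unfolding asym_var_def by (simp add: limI)
qed

end

context reversible_chain
begin

lemma expected_sum_poisson:
  assumes "f = (\<lambda>x. h x - markov_op K h x)"
  shows "expected_sum K f N = (\<lambda>x. markov_op K h x - (markov_op K ^^ Suc N) h x)"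
proof (induction N)
  case 0
  then show ?case by (simp add: expected_sum_0 fun_eq_iff)
next
  case (Suc N)
  have "(\<lambda>y. f y + expected_sum K f N y) = (\<lambda>y. h y - (markov_op K ^^ Suc N) h y)"
    unfolding Suc.IH by (simp add: assms)
  then show ?case
    by (simp add: fun_eq_iff expected_sum_Suc[OF transition] markov_op_diff)
qed

lemma sum_var_poisson:
  assumes f: "f = (\<lambda>x. h x - markov_op K h x)"
  defines "e n \<equiv> l2_inner \<mu> h ((markov_op K ^^ n) h)"
  shows "sum_var N \<mu> K f = real N * (2 * l2_inner \<mu> h f - l2_inner \<mu> f f) + 2 * (e (Suc N) - e 1)"
proof (induction N)
  case 0
  then show ?case by (simp add: sum_var_0)
next
  case (Suc N)
  have mean_f: "mean \<mu> f = 0"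
    unfolding f by (rule mean_poisson)
  define u where "u = (markov_op K ^^ Suc N) h"
  have Kh: "markov_op K h = (\<lambda>x. h x - f x)"
    by (simp add: f)
  have "l2_inner \<mu> f u = e (Suc N) - e (Suc (Suc N))"
    unfolding f l2_inner_diff_left markov_op_self_adjoint e_def u_def by simp
  then have "l2_inner \<mu> f (expected_sum K f N)
      = l2_inner \<mu> h f - l2_inner \<mu> f f - (e (Suc N) - e (Suc (Suc N)))"
    unfolding expected_sum_poisson[OF f] l2_inner_diff_right Kh u_def
    by (simp add: l2_inner_commute)
  then show ?case
    by (simp add: sum_var_Suc[OF mean_f] Suc.IH algebra_simps)
qed

lemma asym_var_poisson:
  assumes f: "f = (\<lambda>x. h x - markov_op K h x)"
  shows "asym_var \<mu> f K = ereal (2 * l2_inner \<mu> h f - l2_inner \<mu> f f)"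
proof -
  define \<sigma> where "\<sigma> = 2 * l2_inner \<mu> h f - l2_inner \<mu> f f"
  define e where "e n = l2_inner \<mu> h ((markov_op K ^^ n) h)" for n
  define C where "C = (\<Sum>x\<in>UNIV. \<mu> x * \<bar>h x\<bar>) * (\<Sum>y\<in>UNIV. \<bar>h y\<bar>)"
  have e_bounded: "\<bar>e n\<bar> \<le> C" for n
    unfolding e_def C_def by (rule l2_inner_markov_op_power_bounded[OF distribution transition])
  have "(\<lambda>N. 2 * (e (Suc N) - e 1) / real N) \<longlonglongrightarrow> 0"
  proof (rule Lim_null_comparison)
    show "\<forall>\<^sub>F N in sequentially. norm (2 * (e (Suc N) - e 1) / real N) \<le> 4 * C / real N"
    proof (intro always_eventually allI)
      fix N
      have "\<bar>2 * (e (Suc N) - e 1)\<bar> \<le> 4 * C"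
        using e_bounded[of "Suc N"] e_bounded[of 1] by (simp add: abs_le_iff)
      then show "norm (2 * (e (Suc N) - e 1) / real N) \<le> 4 * C / real N"
        by (simp add: abs_divide divide_right_mono)
    qed
    show "(\<lambda>N. 4 * C / real N) \<longlonglongrightarrow> 0"
      by (rule lim_const_over_n)
  qed
  then have "(\<lambda>N. \<sigma> + 2 * (e (Suc N) - e 1) / real N) \<longlonglongrightarrow> \<sigma>"
    using tendsto_add[OF tendsto_const] by fastforce
  moreover have "\<forall>\<^sub>F N in sequentially. \<sigma> + 2 * (e (Suc N) - e 1) / real N = sum_var N \<mu> K f / real N"
    unfolding eventually_sequentially
    by (intro exI[of _ 1]) (simp add: sum_var_poisson[OF f] \<sigma>_def e_def field_simps)
  ultimately have "(\<lambda>N. sum_var N \<mu> K f / real N) \<longlonglongrightarrow> \<sigma>"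
    by (rule Lim_transform_eventually)
  then show ?thesis
    unfolding asym_var_def \<sigma>_def by (intro limI tendsto_ereal)
qed

end

section \<open>Harmonic functions and the Poisson equation\<close>

definition liouville :: "('a::finite \<Rightarrow> 'a \<Rightarrow> real) \<Rightarrow> bool" where
  "liouville K \<longleftrightarrow> (\<forall>h. markov_op K h = h \<longrightarrow> (\<forall>x y. h x = h y))"

lemma mpow_nonneg: "transition_matrix K \<Longrightarrow> mpow K n x y \<ge> 0"
  by (induction n arbitrary: y) (auto intro!: sum_nonneg simp: transition_matrix_def)

lemma mpow_Suc_pos:
  assumes K: "transition_matrix K" and "mpow K (Suc n) x y > 0"
  obtains w where "mpow K n x w > 0" and "K w y > 0"
proof -
  have "\<not> (\<forall>w. mpow K n x w * K w y \<le> 0)"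
    using assms(2) sum_nonpos[of UNIV "\<lambda>w. mpow K n x w * K w y"] by auto
  then obtain w where "mpow K n x w * K w y > 0"
    by (auto simp: not_le)
  moreover have "mpow K n x w \<ge> 0" and "K w y \<ge> 0"
    using mpow_nonneg[OF K] K by (simp_all add: transition_matrix_def)
  ultimately have "mpow K n x w > 0 \<and> K w y > 0"
    by (simp add: zero_less_mult_iff)
  with that show ?thesis
    by blast
qed

lemma harmonic_max_step:
  assumes "transition_matrix K" and "markov_op K h = h"
    and "\<And>w. h w \<le> h z" and "K z y > 0"
  shows "h y = h z"
proof -
  have "(\<Sum>w\<in>UNIV. K z w * (h z - h w)) = h z - markov_op K h z"
    using assms(1) by (simp add: markov_op_def right_diff_distrib sum_subtractf transition_matrix_def
        sum_distrib_right[symmetric])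
  also have "\<dots> = 0"
    using assms(2) by simp
  finally have "K z y * (h z - h y) = 0"
    using assms(1,3) by (subst (asm) sum_nonneg_eq_0_iff) (simp_all add: transition_matrix_def)
  then show ?thesis
    using assms(4) by simp
qed

lemma irreducible_imp_liouville:
  assumes K: "transition_matrix K" and "irreducible_tm K"
  shows "liouville K"
  unfolding liouville_def
proof (intro allI impI)
  fix h :: "'a \<Rightarrow> real" and x y
  assume harmonic: "markov_op K h = h"
  have "Max (range h) \<in> range h"
    by (rule Max_in) auto
  then obtain z where z: "h z = Max (range h)"
    by (metis rangeE)
  have z_max: "h w \<le> h z" for w
    unfolding z by (rule Max_ge) auto
  have reach: "mpow K n z y > 0 \<Longrightarrow> h y = h z" for n y
  proof (induction n arbitrary: y)
    case 0
    then show ?case by (simp split: if_splits)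
  next
    case (Suc n)
    obtain w where "mpow K n z w > 0" and "K w y > 0"
      by (rule mpow_Suc_pos[OF K Suc.prems])
    then show ?case
      using Suc.IH harmonic_max_step[OF K harmonic] z_max by metis
  qed
  then have "h w = h z" for w
    using assms(2) unfolding irreducible_tm_def by blast
  then show "h x = h y"
    by metis
qed

text \<open>Adding the mean makes \<open>h \<mapsto> h - K h + mean \<mu> h\<close> injective on \<open>real^'a\<close> under the
  Liouville property, hence surjective.\<close>
lemma (in stationary_chain) poisson_solvable:
  assumes "liouville K" and "mean \<mu> f = 0"
  shows "\<exists>h. f = (\<lambda>x. h x - markov_op K h x)"
proof -
  define T :: "real^'a \<Rightarrow> real^'a" where
    "T v = (\<chi> x. v $ x - markov_op K (($) v) x + mean \<mu> (($) v))" for v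
  have mean_T: "mean \<mu> (\<lambda>x. h x - markov_op K h x + c) = c" for h c
  proof -
    have "mean \<mu> (\<lambda>x. h x - markov_op K h x + c) = mean \<mu> h - mean \<mu> (markov_op K h) + c * (\<Sum>x\<in>UNIV. \<mu> x)"
      by (simp add: mean_def algebra_simps sum.distrib sum_subtractf sum_distrib_left)
    then show ?thesis
      using distribution by (simp add: mean_markov_op prob_dist_def)
  qed
  have lin: "linear T"
    by (rule linearI) (simp_all add: T_def vec_eq_iff markov_op_def mean_def sum.distrib sum_distrib_left algebra_simps)
  have "inj T"
    unfolding linear_injective_0[OF lin]
  proof (intro allI impI)
    fix v :: "real^'a"
    assume "T v = 0"
    then have v: "v $ x - markov_op K (($) v) x + mean \<mu> (($) v) = 0" for x
      by (simp add: T_def vec_eq_iff)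
    then have "mean \<mu> (($) v) = 0"
      using mean_T[of "($) v" "mean \<mu> (($) v)"] by (simp add: mean_def)
    with v have "markov_op K (($) v) = ($) v"
      by (simp add: fun_eq_iff)
    with assms(1) have "v $ x = v $ y" for x y
      by (simp add: liouville_def)
    then have "mean \<mu> (($) v) = v $ x" for x
      using mean_const[OF distribution, of "v $ x"] by (metis ext)
    with \<open>mean \<mu> (($) v) = 0\<close> show "v = 0"
      by (simp add: vec_eq_iff)
  qed
  then obtain v where "T v = (\<chi> x. f x)"
    using linear_inj_imp_surj[OF lin] by (metis surjD)
  then have f: "f = (\<lambda>x. v $ x - markov_op K (($) v) x + mean \<mu> (($) v))"
    by (simp add: T_def vec_eq_iff fun_eq_iff)
  then have "mean \<mu> (($) v) = 0"
    using mean_T assms(2) by simp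
  with f show ?thesis
    by auto
qed

section \<open>Efficiency domination\<close>

lemma eff_dominates_liouville:
  assumes P: "reversible_chain \<mu> P" and "liouville P"
    and Q: "reversible_chain \<mu> Q" and pos: "\<forall>x. \<mu> x > 0"
    and dom: "eff_dominates \<mu> Q P"
  shows "liouville Q"
  unfolding liouville_def
proof (intro allI impI)
  interpret P: reversible_chain \<mu> P by (fact P)
  interpret Q: reversible_chain \<mu> Q by (fact Q)
  fix h :: "'a \<Rightarrow> real" and x y
  assume harmonic: "markov_op Q h = h"
  define f where "f = (\<lambda>x. h x - mean \<mu> h)"
  have "markov_op Q f = f"
    using harmonic by (simp add: f_def fun_eq_iff markov_op_diff markov_op_const[OF Q.transition])
  moreover have mean_f: "mean \<mu> f = 0"
    using P.distribution by (simp add: f_def mean_diff mean_const)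
  moreover have "asym_var \<mu> f Q \<noteq> \<infinity>"
  proof -
    obtain g where "f = (\<lambda>x. g x - markov_op P g x)"
      using P.poisson_solvable[OF \<open>liouville P\<close> mean_f] by blast
    then have "asym_var \<mu> f P \<noteq> \<infinity>"
      by (simp add: P.asym_var_poisson)
    then show ?thesis
      using dom by (metis eff_dominates_def ereal_infty_less_eq(1))
  qed
  ultimately have "\<not> l2_inner \<mu> f f > 0"
    using Q.asym_var_harmonic by blast
  then have "f z = 0" for z
    using l2_inner_self_nonpos_imp_zero[OF pos] by simp
  then show "h x = h y"
    by (metis f_def eq_iff_diff_eq_0)
qed

lemma eff_dominates_quadratic_form_le:
  assumes P: "reversible_chain \<mu> P" and "liouville P"
    and Q: "reversible_chain \<mu> Q" and "liouville Q"
    and dom: "eff_dominates \<mu> Q P"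
  shows "l2_inner \<mu> b (markov_op Q b) \<le> l2_inner \<mu> b (markov_op P b)"
proof -
  interpret P: reversible_chain \<mu> P by (fact P)
  interpret Q: reversible_chain \<mu> Q by (fact Q)
  define f where "f = (\<lambda>x. b x - markov_op P b x)"
  define g where "g = (\<lambda>x. b x - markov_op Q b x)"
  have "mean \<mu> f = 0"
    unfolding f_def by (rule P.mean_poisson)
  then obtain a where a: "f = (\<lambda>x. a x - markov_op Q a x)"
    using Q.poisson_solvable[OF \<open>liouville Q\<close>] by blast
  have "asym_var \<mu> f Q \<le> asym_var \<mu> f P"
    using dom by (simp add: eff_dominates_def)
  then have af_le_bf: "l2_inner \<mu> a f \<le> l2_inner \<mu> b f"
    by (simp add: Q.asym_var_poisson[OF a] P.asym_var_poisson[OF f_def])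
  have "l2_inner \<mu> (\<lambda>x. a x - b x) (\<lambda>x. f x - g x)
      = l2_inner \<mu> (\<lambda>x. a x - b x) (\<lambda>x. a x - b x)
        - l2_inner \<mu> (\<lambda>x. a x - b x) (markov_op Q (\<lambda>x. a x - b x))"
    unfolding l2_inner_diff_right[symmetric] by (simp add: a g_def markov_op_diff algebra_simps)
  then have "0 \<le> l2_inner \<mu> (\<lambda>x. a x - b x) (\<lambda>x. f x - g x)"
    using Q.l2_inner_markov_op_le[of "\<lambda>x. a x - b x"] by linarith
  also have "\<dots> = l2_inner \<mu> a f - 2 * l2_inner \<mu> b f + l2_inner \<mu> b g"
  proof -
    have "l2_inner \<mu> a g = l2_inner \<mu> f b"
      unfolding g_def a l2_inner_diff_right l2_inner_diff_left Q.markov_op_self_adjoint ..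
    then show ?thesis
      by (simp add: l2_inner_diff_left l2_inner_diff_right l2_inner_commute[of _ f])
  qed
  finally have "l2_inner \<mu> b f \<le> l2_inner \<mu> b g"
    using af_le_bf by linarith
  then show ?thesis
    by (simp add: f_def g_def l2_inner_diff_right)
qed

section \<open>Quadratic forms and the trace\<close>

lemma l2_inner_markov_op_two_point:
  fixes \<mu> :: "'a::finite \<Rightarrow> real" and i j :: 'a and s :: real
  assumes "reversible \<mu> K"
  defines "b \<equiv> \<lambda>x. (if x = i then 1 else 0) + s * (if x = j then 1 else 0)"
  shows "l2_inner \<mu> b (markov_op K b) = \<mu> i * K i i + s\<^sup>2 * (\<mu> j * K j j) + 2 * s * (\<mu> i * K i j)"
proof -
  have "markov_op K b x = K x i + s * K x j" for x
    unfolding b_def markov_op_add markov_op_cmult markov_op_indicator ..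
  moreover have "l2_inner \<mu> b w = \<mu> i * w i + s * (\<mu> j * w j)" for w
    unfolding b_def l2_inner_add_left l2_inner_cmult_left l2_inner_indicator_left ..
  moreover have "\<mu> j * K j i = \<mu> i * K i j"
    using assms(1) by (simp add: reversible_def)
  ultimately show ?thesis
    by (simp add: power2_eq_square algebra_simps)
qed

lemma quadratic_form_le_trace_ge_imp_eq:
  assumes "reversible \<mu> P" and "reversible \<mu> Q" and pos: "\<forall>x. \<mu> x > 0"
    and le: "\<And>b. l2_inner \<mu> b (markov_op Q b) \<le> l2_inner \<mu> b (markov_op P b)"
    and "trace_tm P \<le> trace_tm Q"
  shows "Q = P"
proof -
  note two_point = l2_inner_markov_op_two_point[OF assms(1)] l2_inner_markov_op_two_point[OF assms(2)]
  have diag_le: "Q i i \<le> P i i" for i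
    using le[of "\<lambda>x. (if x = i then 1 else 0) + 0 * (if x = i then 1 else 0)"] pos
    unfolding two_point by simp
  have diag: "Q i i = P i i" for i
  proof -
    have "(\<Sum>i\<in>UNIV. P i i - Q i i) \<le> 0"
      using assms(5) by (simp add: trace_tm_def sum_subtractf)
    then show ?thesis
      using diag_le sum_nonneg_eq_0_iff[of UNIV "\<lambda>i. P i i - Q i i"]
      by (simp add: sum_nonneg antisym)
  qed
  have "Q i j = P i j" for i j
    using le[of "\<lambda>x. (if x = i then 1 else 0) + 1 * (if x = j then 1 else 0)"]
      le[of "\<lambda>x. (if x = i then 1 else 0) + (-1) * (if x = j then 1 else 0)"] pos
    unfolding two_point by (auto simp: diag)
  then show ?thesis
    by (simp add: fun_eq_iff)
qed

lemma trace_tm_lower_bound: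
  assumes "prob_dist \<mu>" and pos: "\<forall>x. \<mu> x > 0"
    and Q: "transition_matrix Q" and rev: "reversible \<mu> Q"
  shows "max 0 ((2 * Max (range \<mu>) - 1) / Max (range \<mu>)) \<le> trace_tm Q"
proof -
  define M where "M = Max (range \<mu>)"
  have "M \<in> range \<mu>"
    unfolding M_def by (rule Max_in) auto
  then obtain m where m: "\<mu> m = M"
    by (metis rangeE)
  have "M > 0"
    using pos m by metis
  have Q_le_1: "Q y m \<le> 1" for y
    using Q member_le_sum[of m UNIV "Q y"] by (simp add: transition_matrix_def)
  have off_diag: "Q m y \<le> \<mu> y / M" for y
  proof -
    have "M * Q m y = \<mu> y * Q y m"
      using rev m by (simp add: reversible_def)
    also have "\<dots> \<le> \<mu> y"
      using Q_le_1[of y] pos by (simp add: less_imp_le mult_left_le)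
    finally show ?thesis
      using \<open>M > 0\<close> by (simp add: field_simps)
  qed
  have "1 - Q m m = (\<Sum>y\<in>UNIV - {m}. Q m y)"
    using Q sum.remove[of UNIV m "Q m"] by (simp add: transition_matrix_def)
  also have "\<dots> \<le> (\<Sum>y\<in>UNIV - {m}. \<mu> y) / M"
    unfolding sum_divide_distrib by (intro sum_mono off_diag)
  also have "(\<Sum>y\<in>UNIV - {m}. \<mu> y) = 1 - M"
    using assms(1) sum.remove[of UNIV m \<mu>] m by (simp add: prob_dist_def)
  finally have "(2 * M - 1) / M \<le> Q m m"
    using \<open>M > 0\<close> by (simp add: field_simps)
  moreover have "Q m m \<le> trace_tm Q" and "0 \<le> trace_tm Q"
    using Q by (auto simp: trace_tm_def transition_matrix_def intro: member_le_sum sum_nonneg)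
  ultimately show ?thesis
    unfolding M_def by simp
qed

theorem theorem8:
  fixes \<mu> :: "'a::finite \<Rightarrow> real" and P :: "'a \<Rightarrow> 'a \<Rightarrow> real"
  assumes "prob_dist \<mu>" and "\<forall>x. \<mu> x > 0"
    and "transition_matrix P" and "irreducible_tm P" and "reversible \<mu> P"
    and "trace_tm P = max 0 ((2 * Max (range \<mu>) - 1) / Max (range \<mu>))"
  shows "\<not> (\<exists>Q. transition_matrix Q \<and> reversible \<mu> Q \<and> Q \<noteq> P \<and> eff_dominates \<mu> Q P)"
proof
  assume "\<exists>Q. transition_matrix Q \<and> reversible \<mu> Q \<and> Q \<noteq> P \<and> eff_dominates \<mu> Q P"
  then obtain Q where "transition_matrix Q" and "reversible \<mu> Q" and "Q \<noteq> P"
    and dom: "eff_dominates \<mu> Q P"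
    by blast
  have P: "reversible_chain \<mu> P" and Q: "reversible_chain \<mu> Q"
    using assms \<open>transition_matrix Q\<close> \<open>reversible \<mu> Q\<close> by (simp_all add: reversible_chain_def)
  have "liouville P"
    using assms(3,4) by (rule irreducible_imp_liouville)
  moreover have "liouville Q"
    using P \<open>liouville P\<close> Q assms(2) dom by (rule eff_dominates_liouville)
  ultimately have "l2_inner \<mu> b (markov_op Q b) \<le> l2_inner \<mu> b (markov_op P b)" for b
    using P Q dom by (intro eff_dominates_quadratic_form_le)
  moreover have "trace_tm P \<le> trace_tm Q"
    using trace_tm_lower_bound[OF assms(1,2) \<open>transition_matrix Q\<close> \<open>reversible \<mu> Q\<close>] assms(6) by simp
  ultimately have "Q = P"
    using assms(5) \<open>reversible \<mu> Q\<close> assms(2) by (intro quadratic_form_le_trace_ge_imp_eq)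
  with \<open>Q \<noteq> P\<close> show False ..
qed

end
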